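(* Fix positive definite diagonal matrices $\mathbf{G}_1,\dots,\mathbf{G}_g\in\mathbb{R}^{L\times L}$, a symmetric positive semidefinite matrix $\mathbf{S}\in\mathbb{R}^{gL\times gL}$ (playing the role of $\boldsymbol{\Sigma}+\boldsymbol{\mu}\boldsymbol{\mu}^T$), and a matrix $\mathbf{B}\in\mathbb{R}^{L\times L}$. For positive definite $\mathbf{B}_1,\dots,\mathbf{B}_g\in\mathbb{R}^{L\times L}$ let $\boldsymbol{\Sigma}_0=\operatorname{diag}\{\mathbf{G}_1\mathbf{B}_1\mathbf{G}_1,\dots,\mathbf{G}_g\mathbf{B}_g\mathbf{G}_g\}$ and $Q(\{\mathbf{B}_i\}_{i=1}^g,\{\mathbf{G}_i\}_{i=1}^g)=-\tfrac12\log\det\boldsymbol{\Sigma}_0-\tfrac12\operatorname{tr}(\boldsymbol{\Sigma}_0^{-1}\mathbf{S})$. Let $\zeta:\mathbb{R}^{L\times L}\to\mathbb{R}$ be a differentiable (explicit weak constraint) function and consider the problem $\min_{\{\mathbf{B}_i\}}Q(\{\mathbf{B}_i\},\{\mathbf{G}_i\})$ subject to $\zeta(\mathbf{B}_i)=\zeta(\mathbf{B})$ for all $i=1,\dots,g$. Suppose that, for given multipliers $\lambda_1^k,\dots,\lambda_g^k\in\mathbb{R}$, the point $\{\mathbf{B}_i^{k+1}\}_{i=1}^g$ is a stationary point of the Lagrange function, i.e. $\nabla_{\mathbf{B}_i}Q(\{\mathbf{B}_i^{k+1}\}_{i=1}^g,\{\mathbf{G}_i\}_{i=1}^g)-\lambda_i^k\nabla\zeta(\mathbf{B}_i^{k+1})=0$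 for all $i$. Then there exists a (hidden weak constraint) function $\psi:\mathbb{R}^{L\times L}\to\mathbb{R}$ such that $(\{\mathbf{B}_i^{k+1}\}_{i=1}^g,\{\lambda_i^k\}_{i=1}^g)$ is a KKT pair of the problem $\min_{\{\mathbf{B}_i\}}Q(\{\mathbf{B}_i\},\{\mathbf{G}_i\})$ subject to $\psi(\mathbf{B}_i)=\psi(\mathbf{B})$ for all $i=1,\dots,g$.
   Context: A KKT pair $(\{\mathbf{B}_i\},\{\lambda_i\})$ of the equality-constrained problem $\min Q$ s.t. $\psi(\mathbf{B}_i)=\psi(\mathbf{B})$, $i=1,\dots,g$, means: $\psi(\mathbf{B}_i)=\psi(\mathbf{B})$ for all $i$ (feasibility) and $\nabla_{\mathbf{B}_i}Q(\{\mathbf{B}_i\},\{\mathbf{G}_i\})-\lambda_i\nabla\psi(\mathbf{B}_i)=0$ for all $i$ (stationarity). Gradients are taken with respect to the matrix entries. *)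

theory Defs
  imports "HOL-Analysis.Analysis"
begin

text \<open>The inner product on this
  type is the Frobenius inner product (sum of products of entries), so GDERIV
  gives the gradient with respect to the matrix entries.\<close>

definition sym_mat :: "real^'n^'n \<Rightarrow> bool" where
  "sym_mat A \<longleftrightarrow> transpose A = A"

definition pos_def :: "real^'n^'n \<Rightarrow> bool" where
  "pos_def A \<longleftrightarrow> sym_mat A \<and> (\<forall>x. x \<noteq> 0 \<longrightarrow> x \<bullet> (A *v x) > 0)"

definition pos_semidef :: "real^'n^'n \<Rightarrow> bool" where
  "pos_semidef A \<longleftrightarrow> sym_mat A \<and> (\<forall>x. x \<bullet> (A *v x) \<ge> 0)"

definition diag_mat :: "real^'n^'n \<Rightarrow> bool" where
  "diag_mat A \<longleftrightarrow> (\<forall>i j. i \<noteq> j \<longrightarrow> A $ i $ j = 0)"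

definition Sigma0 :: "('g::finite \<Rightarrow> real^'L^'L) \<Rightarrow> ('g \<Rightarrow> real^'L^'L) \<Rightarrow> real^('g \<times> 'L)^('g \<times> 'L)" where
  "Sigma0 G Bs = (\<chi> p q. if fst p = fst q
       then (G (fst p) ** Bs (fst p) ** G (fst p)) $ snd p $ snd q else 0)"

definition Qfun :: "('g::finite \<Rightarrow> real^'L^'L) \<Rightarrow> real^('g \<times> 'L)^('g \<times> 'L) \<Rightarrow> ('g \<Rightarrow> real^'L^'L) \<Rightarrow> real" where
  "Qfun G S Bs = - (1/2) * ln (det (Sigma0 G Bs)) - (1/2) * trace (matrix_inv (Sigma0 G Bs) ** S)"

definition KKT_pair ::
  "('g::finite \<Rightarrow> real^'L^'L) \<Rightarrow> real^('g \<times> 'L)^('g \<times> 'L) \<Rightarrow> (real^'L^'L \<Rightarrow> real) \<Rightarrow> real^'L^'L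
     \<Rightarrow> ('g \<Rightarrow> real^'L^'L) \<Rightarrow> ('g \<Rightarrow> real) \<Rightarrow> bool" where
  "KKT_pair G S psi B Bs lam \<longleftrightarrow>
     (\<forall>i. psi (Bs i) = psi B) \<and>
     (\<forall>i. \<exists>DQ Dpsi. (GDERIV (\<lambda>X. Qfun G S (Bs(i := X))) (Bs i) :> DQ) \<and>
                   (GDERIV psi (Bs i) :> Dpsi) \<and> DQ - lam i *\<^sub>R Dpsi = 0)"

end

theory Submission
  imports Defs
begin

text \<open>Nothing about \<open>Q\<close> is used: the stationary point need not be feasible for \<open>\<zeta>\<close>,
  but it involves only the finitely many points \<open>B, B\<^sub>1, \<dots>, B\<^sub>g\<close>.  Choose a differentiable
  \<open>h\<close> that agrees with \<open>\<zeta>\<close> at these points and has vanishing derivative there, and put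
  \<open>\<psi> = \<zeta> - h\<close>.  Then \<open>\<psi>\<close> vanishes at all these points, so every \<open>B\<^sub>i\<close> is feasible,
  and \<open>\<nabla>\<psi>(B\<^sub>i) = \<nabla>\<zeta>(B\<^sub>i)\<close>, so the stationarity equations are the KKT equations for \<open>\<psi>\<close>.
  For a finite set \<open>P\<close> such an \<open>h\<close> is \<open>\<Sum>p\<in>P. \<zeta>(p) k\<^sub>p\<close> with
  \<open>k\<^sub>p = V\<^sub>p / (V\<^sub>p + |X - p|\<^sup>2)\<close> and \<open>V\<^sub>p = \<Prod>q\<in>P-{p}. |X - q|\<^sup>2\<close>; at every point of \<open>P\<close>
  either the numerator or the second summand of the denominator vanishes to second order,
  which makes \<open>k\<^sub>p\<close> flat there.\<close>

definition sq_dist :: "'a::real_inner \<Rightarrow> 'a \<Rightarrow> real" where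
  "sq_dist q X = (X - q) \<bullet> (X - q)"

definition vanishing_factor :: "'a::real_inner set \<Rightarrow> 'a \<Rightarrow> 'a \<Rightarrow> real" where
  "vanishing_factor P p X = (\<Prod>q\<in>P - {p}. sq_dist q X)"

definition flat_delta :: "'a::real_inner set \<Rightarrow> 'a \<Rightarrow> 'a \<Rightarrow> real" where
  "flat_delta P p X = vanishing_factor P p X / (vanishing_factor P p X + sq_dist p X)"

lemma has_derivative_sq_dist: "(sq_dist q has_derivative (\<lambda>h. 2 * ((X - q) \<bullet> h))) (at X)"
proof -
  have "((\<lambda>X. (X - q) \<bullet> (X - q)) has_derivative
          (\<lambda>h. (X - q) \<bullet> (h - 0) + (h - 0) \<bullet> (X - q))) (at X)"
    by (intro derivative_eq_intros) auto
  then show ?thesis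
    unfolding sq_dist_def[abs_def] by (simp add: inner_commute)
qed

lemma sq_dist_self [simp]: "sq_dist q q = 0"
  unfolding sq_dist_def by simp

lemma sq_dist_nonneg: "sq_dist q X \<ge> 0"
  unfolding sq_dist_def by simp

lemma sq_dist_pos: "X \<noteq> q \<Longrightarrow> sq_dist q X > 0"
  unfolding sq_dist_def by simp

lemma has_derivative_sq_dist_self: "(sq_dist q has_derivative (\<lambda>h. 0)) (at q)"
  using has_derivative_sq_dist[of q q] by simp

lemma vanishing_factor_nonneg: "vanishing_factor P p X \<ge> 0"
  unfolding vanishing_factor_def by (simp add: prod_nonneg sq_dist_nonneg)

lemma vanishing_factor_self_pos: "vanishing_factor P p p > 0"
  unfolding vanishing_factor_def by (rule prod_pos) (auto intro: sq_dist_pos)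

lemma has_derivative_vanishing_factor:
  "\<exists>V'. (vanishing_factor P p has_derivative V') (at X)"
  unfolding vanishing_factor_def[abs_def]
  by (rule exI, rule has_derivative_prod, rule has_derivative_sq_dist)

lemma vanishing_factor_flat:
  assumes "finite P" "q \<in> P" "q \<noteq> p"
  shows "vanishing_factor P p q = 0"
    and "(vanishing_factor P p has_derivative (\<lambda>h. 0)) (at q)"
proof -
  have split: "vanishing_factor P p X = sq_dist q X * (\<Prod>r\<in>P - {p} - {q}. sq_dist r X)" for X
    unfolding vanishing_factor_def using assms by (subst prod.remove[of _ q]) auto
  then show "vanishing_factor P p q = 0"
    by simp
  have "\<exists>R'. ((\<lambda>X. \<Prod>r\<in>P - {p} - {q}. sq_dist r X) has_derivative R') (at q)"
    by (rule exI, rule has_derivative_prod, rule has_derivative_sq_dist)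
  then obtain R' where "((\<lambda>X. \<Prod>r\<in>P - {p} - {q}. sq_dist r X) has_derivative R') (at q)" ..
  from has_derivative_mult[OF has_derivative_sq_dist_self this]
  show "(vanishing_factor P p has_derivative (\<lambda>h. 0)) (at q)"
    unfolding split[abs_def] by simp
qed

lemma vanishing_factor_plus_sq_dist_pos: "vanishing_factor P p X + sq_dist p X > 0"
  using vanishing_factor_self_pos[of P p] vanishing_factor_nonneg[of P p X] sq_dist_pos[of X p]
  by (cases "X = p") auto

lemma has_derivative_ratio_to_sum:
  fixes f g :: "'a::real_normed_vector \<Rightarrow> 'b::real_normed_field"
  assumes f: "(f has_derivative f') (at x)" and g: "(g has_derivative g') (at x)"
    and nz: "f x + g x \<noteq> 0"
  shows "((\<lambda>x. f x / (f x + g x)) has_derivative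
           (\<lambda>h. (f' h * g x - f x * g' h) / (f x + g x)\<^sup>2)) (at x)"
  using has_derivative_divide'[OF f has_derivative_add[OF f g] nz]
  by (simp add: power2_eq_square algebra_simps)

lemma flat_delta_differentiable: "flat_delta P p differentiable (at X)"
proof -
  obtain V' where "(vanishing_factor P p has_derivative V') (at X)"
    using has_derivative_vanishing_factor by blast
  from has_derivative_ratio_to_sum[OF this has_derivative_sq_dist[of p]]
  show ?thesis
    unfolding flat_delta_def[abs_def] differentiable_def
    using vanishing_factor_plus_sq_dist_pos[of P p X] by force
qed

lemma flat_delta_on:
  assumes "finite P" "X \<in> P"
  shows "flat_delta P p X = (if X = p then 1 else 0)"
  using vanishing_factor_self_pos[of P p] vanishing_factor_flat(1)[OF assms]
  unfolding flat_delta_def by auto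

lemma has_derivative_flat_delta_on:
  assumes "finite P" "X \<in> P"
  shows "(flat_delta P p has_derivative (\<lambda>h. 0)) (at X)"
proof (cases "X = p")
  case True
  obtain V' where "(vanishing_factor P p has_derivative V') (at X)"
    using has_derivative_vanishing_factor by blast
  from has_derivative_ratio_to_sum[OF this has_derivative_sq_dist[of p]]
  show ?thesis
    unfolding flat_delta_def[abs_def] using True vanishing_factor_self_pos[of P p] by simp
next
  case False
  from has_derivative_ratio_to_sum[OF vanishing_factor_flat(2)[OF assms False]
      has_derivative_sq_dist[of p]]
  show ?thesis
    unfolding flat_delta_def[abs_def] using False sq_dist_pos[of X p]
    by (simp add: vanishing_factor_flat(1)[OF assms False])
qed

lemma flat_interpolation:
  fixes P :: "'a::real_inner set" and v :: "'a \<Rightarrow> real"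
  assumes "finite P"
  obtains h where "\<And>X. h differentiable (at X)"
    and "\<And>p. p \<in> P \<Longrightarrow> h p = v p"
    and "\<And>p. p \<in> P \<Longrightarrow> (h has_derivative (\<lambda>_. 0)) (at p)"
proof
  let ?h = "\<lambda>X. \<Sum>q\<in>P. v q * flat_delta P q X"
  show "?h differentiable (at X)" for X
    using assms by (simp add: flat_delta_differentiable)
  show "?h p = v p" if "p \<in> P" for p
  proof -
    have "?h p = (\<Sum>q\<in>P. if q = p then v q else 0)"
      using assms that by (intro sum.cong) (auto simp: flat_delta_on)
    then show ?thesis
      using assms that by simp
  qed
  show "(?h has_derivative (\<lambda>_. 0)) (at p)" if "p \<in> P" for p
  proof -
    have "(?h has_derivative (\<lambda>_. \<Sum>q\<in>P. v q * 0)) (at p)"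
      by (intro has_derivative_sum has_derivative_mult_right
          has_derivative_flat_delta_on[OF assms that])
    then show ?thesis
      by simp
  qed
qed

theorem proposition1:
  fixes G :: "'g::finite \<Rightarrow> real^'L^'L"
    and S :: "real^('g \<times> 'L)^('g \<times> 'L)"
    and B :: "real^'L^'L"
    and zeta :: "real^'L^'L \<Rightarrow> real"
    and Bk :: "'g \<Rightarrow> real^'L^'L"
    and lam :: "'g \<Rightarrow> real"
  assumes G_pd: "\<forall>i. pos_def (G i) \<and> diag_mat (G i)"
    and S_psd: "pos_semidef S"
    and zeta_diff: "\<forall>X. zeta differentiable (at X)"
    and Bk_pd: "\<forall>i. pos_def (Bk i)"
    and stationary: "\<forall>i. \<exists>DQ Dz. (GDERIV (\<lambda>X. Qfun G S (Bk(i := X))) (Bk i) :> DQ) \<and>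
                          (GDERIV zeta (Bk i) :> Dz) \<and> DQ - lam i *\<^sub>R Dz = 0"
  shows "\<exists>psi :: real^'L^'L \<Rightarrow> real. (\<forall>X. psi differentiable (at X)) \<and> KKT_pair G S psi B Bk lam"
proof -
  obtain h where h_diff: "\<And>X. h differentiable (at X)"
    and h_eq: "\<And>p. p \<in> insert B (range Bk) \<Longrightarrow> h p = zeta p"
    and h_flat: "\<And>p. p \<in> insert B (range Bk) \<Longrightarrow> (h has_derivative (\<lambda>_. 0)) (at p)"
    using flat_interpolation[of "insert B (range Bk)"] by auto
  define psi where "psi X = zeta X - h X" for X
  have "psi (Bk i) = psi B" for i
    using h_eq unfolding psi_def by simp
  moreover have "GDERIV psi (Bk i) :> Dz" if "GDERIV zeta (Bk i) :> Dz" for i Dz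
    using has_derivative_diff[OF that[unfolded gderiv_def] h_flat[of "Bk i"]]
    unfolding gderiv_def psi_def[abs_def] by simp
  ultimately have "KKT_pair G S psi B Bk lam"
    unfolding KKT_pair_def using stationary by blast
  moreover have "psi differentiable (at X)" for X
    unfolding psi_def[abs_def] using zeta_diff h_diff by (intro differentiable_diff) auto
  ultimately show ?thesis by blast
qed

end
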